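(* Let $D\subset\mathbb N^n$ be a finite set not contained in any coordinate hyperplane of $\mathbb R^n$, $p$ a prime, and $I\subset\{1,\dots,n\}$ with $\#I=k$. Then $\delta_p(D)\le\delta_p(D_I)+n-k$.
   Context: $D_I=\{\mathbf d\in D:d_j=0\text{ for }j\notin I\}$, regarded as a subset of $\mathbb N^I$. For a finite $D'\subset\mathbb N^{n'}$: if $D'$ is contained in a coordinate hyperplane, $\delta_p(D')=\infty$; otherwise $\delta_p(D')=\frac1{p-1}\min_{r\ge1}\frac{s_{D',p}(r)}r$, where $s_{D',p}(r)$ is the minimum of $\sum_{\mathbf d}s_p(u_{\mathbf d})$ over $U=(u_{\mathbf d})\in\{0,\dots,p^r-1\}^{D'}$ with $\sum u_{\mathbf d}\mathbf d\equiv0\pmod{p^r-1}$ and all coordinates of $\sum u_{\mathbf d}\mathbf d$ positive, and $s_p$ is the base-$p$ digit sum (the minimum over $r$ exists). *)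

theory Defs
  imports Complex_Main "HOL-Library.Extended_Real" "HOL-Computational_Algebra.Primes"
begin

function digit_sum :: "nat \<Rightarrow> nat \<Rightarrow> nat" where
  "digit_sum p m = (if p \<le> 1 \<or> m = 0 then 0 else m mod p + digit_sum p (m div p))"
  by auto
termination
  by (relation "measure (\<lambda>(p, m). m)") auto

text \<open>Vectors in N^J (J a finite index set) are functions nat => nat vanishing outside J.
  D' is contained in a coordinate hyperplane of R^J iff some coordinate j in J vanishes on all of D'.\<close>
definition in_coord_hyperplane :: "nat set \<Rightarrow> (nat \<Rightarrow> nat) set \<Rightarrow> bool" where
  "in_coord_hyperplane J D' \<longleftrightarrow> (\<exists>j\<in>J. \<forall>d\<in>D'. d j = 0)"

definition s_Dp :: "nat \<Rightarrow> nat set \<Rightarrow> (nat \<Rightarrow> nat) set \<Rightarrow> nat \<Rightarrow> nat" where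
  "s_Dp p J D' r = Min {(\<Sum>d\<in>D'. digit_sum p (u d)) | u.
      (\<forall>d\<in>D'. u d < p ^ r) \<and>
      (\<forall>j\<in>J. (\<Sum>d\<in>D'. u d * d j) mod (p ^ r - 1) = 0) \<and>
      (\<forall>j\<in>J. (\<Sum>d\<in>D'. u d * d j) > 0)}"

definition delta_p :: "nat \<Rightarrow> nat set \<Rightarrow> (nat \<Rightarrow> nat) set \<Rightarrow> ereal" where
  "delta_p p J D' = (if in_coord_hyperplane J D' then \<infinity>
     else ereal ((1 / (real p - 1)) * (INF r\<in>{1::nat..}. real (s_Dp p J D' r) / real r)))"

definition restrict_D :: "(nat \<Rightarrow> nat) set \<Rightarrow> nat set \<Rightarrow> (nat \<Rightarrow> nat) set" where
  "restrict_D D I = {d \<in> D. \<forall>j. j \<notin> I \<longrightarrow> d j = 0}"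

end

theory Submission
  imports Defs
begin

text \<open>Given an optimal weight vector for \<open>D\<^sub>I\<close>, put the weight \<open>p\<^sup>r - 1\<close> (digit sum \<open>r(p - 1)\<close>)
  on one vector \<open>e\<^sub>j \<in> D\<close> with \<open>e\<^sub>j j > 0\<close> for every coordinate \<open>j \<notin> I\<close>. These vectors lie outside
  \<open>D\<^sub>I\<close>, their contributions are divisible by \<open>p\<^sup>r - 1\<close>, and they make the missing coordinates
  positive; the vectors of \<open>D\<^sub>I\<close> contribute nothing to those coordinates. Hence
  \<open>s\<^sub>D(r) \<le> s\<^sub>D\<^sub>I(r) + (n - k) r (p - 1)\<close>, and dividing by \<open>r(p - 1)\<close> and taking infima gives the claim.\<close>

declare digit_sum.simps[simp del]

lemma digit_sum_0 [simp]: "digit_sum p 0 = 0"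
  by (simp add: digit_sum.simps)

lemma digit_sum_le: "digit_sum p m \<le> m"
proof (induction p m rule: digit_sum.induct)
  case (1 p m)
  show ?case
  proof (cases "p \<le> 1 \<or> m = 0")
    case True
    then show ?thesis by (simp add: digit_sum.simps)
  next
    case False
    then have "digit_sum p m = m mod p + digit_sum p (m div p)"
      by (simp add: digit_sum.simps)
    also have "\<dots> \<le> m mod p + m div p"
      using 1 False by simp
    also have "\<dots> \<le> m mod p + m div p * p"
      using False by (intro add_left_mono) simp
    also have "\<dots> = m"
      by (rule mod_div_mult_eq)
    finally show ?thesis .
  qed
qed

lemma digit_sum_power_minus_1:
  assumes "p \<ge> 2"
  shows "digit_sum p (p ^ r - 1) = r * (p - 1)"
proof (induction r)
  case 0
  then show ?case by simp
next
  case (Suc r)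
  have split: "p ^ Suc r - 1 = (p - 1) + p * (p ^ r - 1)"
    using assms by (simp add: algebra_simps diff_mult_distrib2)
  have "(p ^ Suc r - 1) mod p = p - 1"
    using assms unfolding split mod_mult_self2 by simp
  moreover have "(p ^ Suc r - 1) div p = p ^ r - 1 + (p - 1) div p"
    unfolding split using assms by (intro div_mult_self2) simp
  moreover have "p ^ Suc r - 1 \<noteq> 0"
    using assms one_less_power[of p "Suc r"] by simp
  ultimately have "digit_sum p (p ^ Suc r - 1) = (p - 1) + digit_sum p (p ^ r - 1)"
    using assms by (subst digit_sum.simps) simp
  then show ?case
    using Suc by simp
qed

definition admissible_weights ::
    "nat \<Rightarrow> nat set \<Rightarrow> (nat \<Rightarrow> nat) set \<Rightarrow> nat \<Rightarrow> ((nat \<Rightarrow> nat) \<Rightarrow> nat) set" where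
  "admissible_weights p J D' r = {u.
      (\<forall>d\<in>D'. u d < p ^ r) \<and>
      (\<forall>j\<in>J. (\<Sum>d\<in>D'. u d * d j) mod (p ^ r - 1) = 0) \<and>
      (\<forall>j\<in>J. (\<Sum>d\<in>D'. u d * d j) > 0)}"

definition weight_digit_sum :: "nat \<Rightarrow> (nat \<Rightarrow> nat) set \<Rightarrow> ((nat \<Rightarrow> nat) \<Rightarrow> nat) \<Rightarrow> nat" where
  "weight_digit_sum p D' u = (\<Sum>d\<in>D'. digit_sum p (u d))"

lemma s_Dp_eq_Min:
  "s_Dp p J D' r = Min (weight_digit_sum p D' ` admissible_weights p J D' r)"
  unfolding s_Dp_def admissible_weights_def weight_digit_sum_def
  by (simp only: setcompr_eq_image Collect_conj_eq)

lemma finite_weight_digit_sums: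
  assumes "finite D'"
  shows "finite (weight_digit_sum p D' ` admissible_weights p J D' r)"
proof (rule finite_subset)
  show "weight_digit_sum p D' ` admissible_weights p J D' r \<subseteq> {..card D' * p ^ r}"
  proof (rule image_subsetI)
    fix u assume "u \<in> admissible_weights p J D' r"
    then have "digit_sum p (u d) \<le> p ^ r" if "d \<in> D'" for d
      using that digit_sum_le[of p "u d"] by (auto simp: admissible_weights_def)
    then have "(\<Sum>d\<in>D'. digit_sum p (u d)) \<le> (\<Sum>d\<in>D'. p ^ r)"
      by (rule sum_mono)
    then show "weight_digit_sum p D' u \<in> {..card D' * p ^ r}"
      by (simp add: weight_digit_sum_def)
  qed
qed simp

lemma s_Dp_le:
  assumes "finite D'" "u \<in> admissible_weights p J D' r"
  shows "s_Dp p J D' r \<le> weight_digit_sum p D' u"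
  unfolding s_Dp_eq_Min using assms by (intro Min_le finite_weight_digit_sums) auto

lemma admissible_weights_nonempty:
  assumes "finite D'" "\<not> in_coord_hyperplane J D'" "p \<ge> 2" "r \<ge> 1"
  shows "admissible_weights p J D' r \<noteq> {}"
proof -
  have pr: "p ^ r > 1"
    using assms by (intro one_less_power) auto
  have "(\<Sum>d\<in>D'. d j) > 0" if "j \<in> J" for j
  proof -
    obtain d0 where "d0 \<in> D'" "d0 j > 0"
      using assms(2) \<open>j \<in> J\<close> unfolding in_coord_hyperplane_def by auto
    then show ?thesis
      using assms(1) member_le_sum[of d0 D' "\<lambda>d. d j"] by linarith
  qed
  moreover have "p ^ r - 1 < p ^ r"
    using pr by simp
  ultimately have "(\<lambda>_. p ^ r - 1) \<in> admissible_weights p J D' r"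
    using pr by (simp add: admissible_weights_def sum_distrib_left[symmetric])
  then show ?thesis
    by blast
qed

lemma s_Dp_attained:
  assumes "finite D'" "\<not> in_coord_hyperplane J D'" "p \<ge> 2" "r \<ge> 1"
  obtains u where "u \<in> admissible_weights p J D' r" "weight_digit_sum p D' u = s_Dp p J D' r"
  using Min_in[OF finite_weight_digit_sums[OF assms(1)]] admissible_weights_nonempty[OF assms]
  unfolding s_Dp_eq_Min by (metis (no_types, lifting) image_iff image_is_empty)

lemma sum_piecewise_disjoint:
  fixes a b :: "'a \<Rightarrow> 'b::comm_monoid_add"
  assumes "finite D" "E \<subseteq> D" "F \<subseteq> D" "E \<inter> F = {}"
  shows "(\<Sum>d\<in>D. if d \<in> E then a d else if d \<in> F then b d else 0) = sum a E + sum b F"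
proof -
  have "(\<Sum>d\<in>D. if d \<in> E then a d else if d \<in> F then b d else 0)
      = (\<Sum>d\<in>E \<union> F. if d \<in> E then a d else if d \<in> F then b d else 0)"
    using assms by (intro sum.mono_neutral_right) auto
  also have "\<dots> = sum a E + (\<Sum>d\<in>F. if d \<in> E then a d else if d \<in> F then b d else 0)"
    using assms by (subst sum.union_disjoint) (auto dest: finite_subset)
  also have "(\<Sum>d\<in>F. if d \<in> E then a d else if d \<in> F then b d else 0) = sum b F"
    using assms(4) by (intro sum.cong) auto
  finally show ?thesis .
qed

lemma coordinate_witnesses_outside_restrict_D:
  assumes "finite J" "\<not> in_coord_hyperplane J D"
  obtains E where "E \<subseteq> D" "card E \<le> card (J - I)" "E \<inter> restrict_D D I = {}"
    "\<And>j. j \<in> J - I \<Longrightarrow> \<exists>e\<in>E. e j > 0"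
proof -
  obtain e where e: "\<And>j. j \<in> J - I \<Longrightarrow> e j \<in> D \<and> e j j > 0"
    using assms(2) unfolding in_coord_hyperplane_def by (metis DiffD1 neq0_conv)
  have "e ` (J - I) \<inter> restrict_D D I = {}"
    using e by (fastforce simp: restrict_D_def)
  moreover have "card (e ` (J - I)) \<le> card (J - I)"
    using assms(1) by (intro card_image_le) simp
  ultimately show ?thesis
    using e by (intro that[of "e ` (J - I)"]) auto
qed

lemma s_Dp_le_restrict_D:
  assumes fD: "finite D" and fJ: "finite J" and p2: "p \<ge> 2" and r1: "r \<ge> 1"
    and nh: "\<not> in_coord_hyperplane J D"
    and nhI: "\<not> in_coord_hyperplane I (restrict_D D I)"
  shows "s_Dp p J D r \<le> s_Dp p I (restrict_D D I) r + card (J - I) * (r * (p - 1))"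
proof -
  define DI where "DI = restrict_D D I"
  have DI_sub: "DI \<subseteq> D" and fDI: "finite DI"
    using fD by (auto simp: DI_def restrict_D_def)
  have pr: "p ^ r > 1"
    using p2 r1 by (intro one_less_power) auto
  obtain u where u: "u \<in> admissible_weights p I DI r"
    and u_opt: "weight_digit_sum p DI u = s_Dp p I DI r"
    using s_Dp_attained[OF fDI nhI[folded DI_def] p2 r1] .
  obtain E where E_sub: "E \<subseteq> D" and card_E: "card E \<le> card (J - I)"
    and disj: "E \<inter> DI = {}" and E_pos: "\<And>j. j \<in> J - I \<Longrightarrow> \<exists>e\<in>E. e j > 0"
    using coordinate_witnesses_outside_restrict_D[OF fJ nh, of I] unfolding DI_def by blast
  have fE: "finite E"
    using E_sub fD finite_subset by blast
  define u' where "u' d = (if d \<in> E then p ^ r - 1 else if d \<in> DI then u d else 0)" for d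
  have sum_u': "(\<Sum>d\<in>D. u' d * d j) = (p ^ r - 1) * (\<Sum>d\<in>E. d j) + (\<Sum>d\<in>DI. u d * d j)" for j
  proof -
    have "(\<Sum>d\<in>D. u' d * d j)
        = (\<Sum>d\<in>D. if d \<in> E then (p ^ r - 1) * d j else if d \<in> DI then u d * d j else 0)"
      by (intro sum.cong) (simp_all add: u'_def)
    then show ?thesis
      by (simp add: sum_piecewise_disjoint[OF fD E_sub DI_sub disj] sum_distrib_left)
  qed
  have DI_vanish: "(\<Sum>d\<in>DI. u d * d j) = 0" if "j \<notin> I" for j
    using that by (simp add: DI_def restrict_D_def)
  have E_sum_pos: "(\<Sum>d\<in>E. d j) > 0" if j: "j \<in> J - I" for j
  proof -
    obtain e where "e \<in> E" "e j > 0"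
      using E_pos[OF j] by blast
    then show ?thesis
      using fE member_le_sum[of e E "\<lambda>d. d j"] by linarith
  qed
  have "u' d < p ^ r" if "d \<in> D" for d
    using u pr p2 that by (auto simp: u'_def admissible_weights_def)
  moreover have "(\<Sum>d\<in>D. u' d * d j) mod (p ^ r - 1) = 0" if "j \<in> J" for j
    using u by (cases "j \<in> I") (simp_all add: sum_u' DI_vanish admissible_weights_def)
  moreover have "(\<Sum>d\<in>D. u' d * d j) > 0" if "j \<in> J" for j
    using u that pr by (cases "j \<in> I") (auto simp: sum_u' E_sum_pos admissible_weights_def)
  ultimately have "u' \<in> admissible_weights p J D r"
    by (simp add: admissible_weights_def)
  then have "s_Dp p J D r \<le> weight_digit_sum p D u'"
    by (rule s_Dp_le[OF fD])
  also have "weight_digit_sum p D u'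
      = (\<Sum>d\<in>D. if d \<in> E then r * (p - 1) else if d \<in> DI then digit_sum p (u d) else 0)"
    unfolding weight_digit_sum_def
    using digit_sum_power_minus_1[OF p2, of r] by (intro sum.cong) (simp_all add: u'_def)
  also have "\<dots> = card E * (r * (p - 1)) + weight_digit_sum p DI u"
    by (simp add: sum_piecewise_disjoint[OF fD E_sub DI_sub disj] weight_digit_sum_def)
  also have "\<dots> \<le> s_Dp p I DI r + card (J - I) * (r * (p - 1))"
    using card_E u_opt by simp
  finally show ?thesis
    unfolding DI_def .
qed

lemma cINF_le_cINF_add:
  fixes f g :: "'a \<Rightarrow> real"
  assumes "A \<noteq> {}" "bdd_below (f ` A)" "\<And>x. x \<in> A \<Longrightarrow> f x \<le> g x + c"
  shows "(INF x\<in>A. f x) \<le> (INF x\<in>A. g x) + c"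
proof -
  have "(INF x\<in>A. f x) - c \<le> g x" if "x \<in> A" for x
    using cINF_lower[OF assms(2) that] assms(3)[OF that] by linarith
  then have "(INF x\<in>A. f x) - c \<le> (INF x\<in>A. g x)"
    using assms(1) by (intro cINF_greatest) auto
  then show ?thesis
    by linarith
qed

lemma delta_p_le_restrict_D:
  assumes "finite D" "finite J" "\<not> in_coord_hyperplane J D" "p \<ge> 2"
  shows "delta_p p J D \<le> delta_p p I (restrict_D D I) + ereal (real (card (J - I)))"
proof (cases "in_coord_hyperplane I (restrict_D D I)")
  case True
  then show ?thesis
    by (simp add: delta_p_def)
next
  case False
  define c where "c = real (card (J - I)) * (real p - 1)"
  have q: "real p - 1 > 0"
    using assms(4) by simp
  have "real (s_Dp p J D r) / real r \<le> real (s_Dp p I (restrict_D D I) r) / real r + c"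
    if "r \<in> {1..}" for r :: nat
  proof -
    have "s_Dp p J D r \<le> s_Dp p I (restrict_D D I) r + card (J - I) * (r * (p - 1))"
      using s_Dp_le_restrict_D[OF assms(1,2,4) _ assms(3) False, of r] that by simp
    then have "real (s_Dp p J D r)
        \<le> real (s_Dp p I (restrict_D D I) r) + real (card (J - I) * (r * (p - 1)))"
      unfolding of_nat_add[symmetric] of_nat_le_iff .
    also have "real (card (J - I) * (r * (p - 1))) = c * real r"
      using assms(4) by (simp add: c_def of_nat_diff)
    finally have "real (s_Dp p J D r) \<le> real (s_Dp p I (restrict_D D I) r) + c * real r" .
    then show ?thesis
      using that by (simp add: field_simps)
  qed
  then have "(INF r\<in>{1::nat..}. real (s_Dp p J D r) / real r)
      \<le> (INF r\<in>{1::nat..}. real (s_Dp p I (restrict_D D I) r) / real r) + c"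
    by (intro cINF_le_cINF_add bdd_belowI2[of _ 0]) auto
  from divide_right_mono[OF this less_imp_le[OF q]]
  have "1 / (real p - 1) * (INF r\<in>{1::nat..}. real (s_Dp p J D r) / real r)
      \<le> 1 / (real p - 1) * (INF r\<in>{1::nat..}. real (s_Dp p I (restrict_D D I) r) / real r)
        + real (card (J - I))"
    using q by (simp add: c_def add_divide_distrib)
  then show ?thesis
    using False assms(3) by (simp add: delta_p_def)
qed

theorem lemma2p6:
  fixes n k p :: nat and D :: "(nat \<Rightarrow> nat) set" and I :: "nat set"
  assumes "finite D"
    and "\<forall>d\<in>D. \<forall>j. j \<notin> {1..n} \<longrightarrow> d j = 0"
    and "\<not> in_coord_hyperplane {1..n} D"
    and "prime p"
    and "I \<subseteq> {1..n}" and "card I = k"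
  shows "delta_p p {1..n} D \<le> delta_p p I (restrict_D D I) + ereal (real n - real k)"
proof -
  have "card ({1..n} - I) = n - k" and "k \<le> n"
    using assms(5,6) card_mono[OF _ assms(5)] by (auto simp: card_Diff_subset finite_subset)
  then have "real (card ({1..n} - I)) = real n - real k"
    by simp
  then show ?thesis
    using delta_p_le_restrict_D[OF assms(1) _ assms(3) prime_ge_2_nat[OF assms(4)], of I] by simp
qed

end
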